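(* Let $\rho:\mathbb R\to[0,\infty)$ be strictly convex with $\rho(0)=0$. For a nonempty finite index set $T$ and real numbers $(Y_i)_{i\in T}$ let $m_T$ denote the minimizer over $\mu\in\mathbb R$ of $\sum_{i\in T}\rho(Y_i-\mu)$. Then for every nonempty finite index set $S$, every family of real numbers $(Y_i)_{i\in S}$ and every partition $S=\bigcup_{j}S_j$ into finitely many pairwise disjoint nonempty sets $S_j$, \[\min_j m_{S_j}\le m_S\le \max_j m_{S_j}.\] *)

theory Defs
  imports "HOL-Analysis.Analysis" "HOL-Library.Disjoint_Sets"
begin

definition strictly_convex :: "(real \<Rightarrow> real) \<Rightarrow> bool" where
  "strictly_convex f \<longleftrightarrow>
     (\<forall>x y t. x \<noteq> y \<longrightarrow> 0 < t \<longrightarrow> t < 1 \<longrightarrow>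
        f ((1 - t) * x + t * y) < (1 - t) * f x + t * f y)"

definition loc_min :: "(real \<Rightarrow> real) \<Rightarrow> ('a \<Rightarrow> real) \<Rightarrow> 'a set \<Rightarrow> real" where
  "loc_min rho Y T =
     (THE mu. \<forall>nu. (\<Sum>i\<in>T. rho (Y i - mu)) \<le> (\<Sum>i\<in>T. rho (Y i - nu)))"

end

theory Submission
  imports Defs
begin

text \<open>Each block objective is convex and minimized at its own location estimate, hence
  nondecreasing on the far side of that minimizer. If the pooled minimizer m lay outside the
  interval [a, b] spanned by the block minimizers, then moving m to the nearest point of
  [a, b] would decrease every block objective, hence their sum, the pooled objective;
  uniqueness of the pooled minimizer, which comes from strict convexity, forces m \<in> [a, b].
  Strict convexity together with \<open>rho \<ge> 0\<close> and \<open>rho 0 = 0\<close> makes rho, and hence the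
  objective, grow at least linearly, so that the minimizer exists at all.\<close>

definition loc_objective :: "(real \<Rightarrow> real) \<Rightarrow> ('a \<Rightarrow> real) \<Rightarrow> 'a set \<Rightarrow> real \<Rightarrow> real" where
  "loc_objective rho Y T mu = (\<Sum>i\<in>T. rho (Y i - mu))"

lemma strictly_convexD:
  assumes "strictly_convex f" "x \<noteq> y" "0 < t" "t < 1"
  shows "f ((1 - t) * x + t * y) < (1 - t) * f x + t * f y"
  using assms unfolding strictly_convex_def by blast

lemma strictly_convex_imp_convex_on:
  assumes "strictly_convex f"
  shows "convex_on UNIV f"
proof (rule convex_onI)
  fix t x y :: real
  assume t: "0 < t" "t < 1"
  show "f ((1 - t) *\<^sub>R x + t *\<^sub>R y) \<le> (1 - t) * f x + t * f y"
  proof (cases "x = y")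
    case True
    then show ?thesis by (simp add: algebra_simps)
  next
    case False
    then show ?thesis using strictly_convexD[OF assms False t] by simp
  qed
qed simp

lemma strictly_convex_loc_objective:
  assumes "strictly_convex rho" "finite T" "T \<noteq> {}"
  shows "strictly_convex (loc_objective rho Y T)"
  unfolding strictly_convex_def loc_objective_def
proof (intro allI impI)
  fix x y t :: real
  assume "x \<noteq> y" "0 < t" "t < 1"
  have "(\<Sum>i\<in>T. rho (Y i - ((1 - t) * x + t * y)))
      < (\<Sum>i\<in>T. (1 - t) * rho (Y i - x) + t * rho (Y i - y))"
  proof (rule sum_strict_mono[OF assms(2,3)])
    fix i
    have "Y i - ((1 - t) * x + t * y) = (1 - t) * (Y i - x) + t * (Y i - y)"
      by (simp add: algebra_simps)
    then show "rho (Y i - ((1 - t) * x + t * y)) < (1 - t) * rho (Y i - x) + t * rho (Y i - y)"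
      using strictly_convexD[OF assms(1), of "Y i - x" "Y i - y" t] \<open>x \<noteq> y\<close> \<open>0 < t\<close> \<open>t < 1\<close>
      by simp
  qed
  then show "(\<Sum>i\<in>T. rho (Y i - ((1 - t) * x + t * y)))
      < (1 - t) * (\<Sum>i\<in>T. rho (Y i - x)) + t * (\<Sum>i\<in>T. rho (Y i - y))"
    by (simp add: sum.distrib sum_distrib_left)
qed

lemma strictly_convex_minimizer_unique:
  assumes "strictly_convex f" "\<forall>z. f x \<le> f z" "\<forall>z. f y \<le> f z"
  shows "x = y"
proof (rule ccontr)
  assume "x \<noteq> y"
  then have "f ((x + y) / 2) < (f x + f y) / 2"
    using strictly_convexD[OF assms(1), of x y "1/2"] by (simp add: add_divide_distrib)
  moreover have "f x = f y"
    using assms(2,3) by (meson order.antisym)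
  ultimately show False
    using assms(2) by (metis add_divide_distrib field_sum_of_halves not_le)
qed

lemma convex_on_scale_ge:
  fixes f :: "real \<Rightarrow> real"
  assumes "convex_on UNIV f" "f 0 = 0" "1 \<le> t"
  shows "t * f x \<le> f (t * x)"
proof -
  have "f ((1 - 1/t) * 0 + (1/t) * (t * x)) \<le> (1 - 1/t) * f 0 + (1/t) * f (t * x)"
    using convex_onD[OF assms(1), of "1/t" 0 "t * x"] assms(3) by simp
  then have "f x \<le> f (t * x) / t"
    using assms(2,3) by simp
  then show ?thesis
    using assms(3) by (simp add: mult.commute pos_le_divide_eq)
qed

lemma strictly_convex_linear_growth:
  assumes "strictly_convex rho" "\<And>x. rho x \<ge> 0" "rho 0 = 0"
  obtains c where "c > 0" "\<And>z. 1 \<le> \<bar>z\<bar> \<Longrightarrow> c * \<bar>z\<bar> \<le> rho z"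
proof
  have pos: "rho z > 0" if "z \<noteq> 0" for z
  proof -
    have "rho ((1 - 1/2) * 0 + (1/2) * z) < (1 - 1/2) * rho 0 + (1/2) * rho z"
      using strictly_convexD[OF assms(1), of 0 z "1/2"] that by simp
    then show ?thesis
      using assms(2)[of "z/2"] assms(3) by simp
  qed
  show "min (rho 1) (rho (-1)) > 0"
    using pos[of 1] pos[of "-1"] by simp
  fix z :: real
  assume z: "1 \<le> \<bar>z\<bar>"
  have "\<bar>z\<bar> * rho (sgn z) \<le> rho (\<bar>z\<bar> * sgn z)"
    using convex_on_scale_ge[OF strictly_convex_imp_convex_on[OF assms(1)] assms(3) z] .
  moreover have "min (rho 1) (rho (-1)) \<le> rho (sgn z)"
    using z by (auto simp: sgn_if)
  ultimately show "min (rho 1) (rho (-1)) * \<bar>z\<bar> \<le> rho z"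
    using z by (metis abs_ge_zero mult.commute mult_left_mono order.trans abs_mult_sgn)
qed

lemma continuous_attains_global_min:
  fixes f :: "real \<Rightarrow> real"
  assumes "continuous_on UNIV f" "0 \<le> R" "\<And>x. R < \<bar>x\<bar> \<Longrightarrow> f 0 \<le> f x"
  obtains m where "\<And>x. f m \<le> f x"
proof -
  obtain m where m: "m \<in> cball 0 R" "\<And>y. y \<in> cball 0 R \<Longrightarrow> f m \<le> f y"
    using continuous_attains_inf[of "cball 0 R" f] continuous_on_subset[OF assms(1)] assms(2)
    by auto
  have "f m \<le> f x" for x
  proof (cases "\<bar>x\<bar> \<le> R")
    case True
    then show ?thesis using m(2) by simp
  next
    case False
    then show ?thesis using m(2)[of 0] assms(2) assms(3)[of x] by simp
  qed
  then show thesis ..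
qed

lemma loc_objective_has_minimizer:
  assumes "strictly_convex rho" "\<And>x. rho x \<ge> 0" "rho 0 = 0" "finite T" "T \<noteq> {}"
  obtains m where "\<And>nu. loc_objective rho Y T m \<le> loc_objective rho Y T nu"
proof -
  let ?F = "loc_objective rho Y T"
  obtain c where c: "c > 0" "\<And>z. 1 \<le> \<bar>z\<bar> \<Longrightarrow> c * \<bar>z\<bar> \<le> rho z"
    using strictly_convex_linear_growth[OF assms(1-3)] by blast
  obtain i0 where i0: "i0 \<in> T"
    using assms(5) by blast
  have cont: "continuous_on UNIV ?F"
    by (intro convex_on_continuous open_UNIV strictly_convex_imp_convex_on
        strictly_convex_loc_objective assms(1,4,5))
  have "?F 0 \<le> ?F nu" if nu: "\<bar>Y i0\<bar> + max 1 (?F 0 / c) < \<bar>nu\<bar>" for nu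
  proof -
    have far: "max 1 (?F 0 / c) < \<bar>Y i0 - nu\<bar>"
      using nu by linarith
    have "?F 0 = c * (?F 0 / c)"
      using c(1) by simp
    also have "\<dots> \<le> c * \<bar>Y i0 - nu\<bar>"
      using far c(1) by (intro mult_left_mono) auto
    also have "\<dots> \<le> rho (Y i0 - nu)"
      using far c(2) by simp
    also have "\<dots> \<le> ?F nu"
      unfolding loc_objective_def
      using member_le_sum[of i0 T "\<lambda>i. rho (Y i - nu)"] i0 assms(2,4) by simp
    finally show ?thesis .
  qed
  then obtain m where "\<And>nu. ?F m \<le> ?F nu"
    using continuous_attains_global_min[OF cont, where R = "\<bar>Y i0\<bar> + max 1 (?F 0 / c)"] by fastforce
  then show thesis ..
qed

lemma loc_min_eqI:
  assumes "strictly_convex rho" "finite T" "T \<noteq> {}"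
    and "\<And>nu. loc_objective rho Y T m \<le> loc_objective rho Y T nu"
  shows "loc_min rho Y T = m"
proof -
  have "\<exists>!m. \<forall>nu. loc_objective rho Y T m \<le> loc_objective rho Y T nu"
    using assms(4) strictly_convex_minimizer_unique[OF strictly_convex_loc_objective[OF assms(1-3)]]
    by blast
  from the1_equality[OF this] assms(4) show ?thesis
    by (simp add: loc_min_def loc_objective_def)
qed

lemma loc_min_minimizes:
  assumes "strictly_convex rho" "\<And>x. rho x \<ge> 0" "rho 0 = 0" "finite T" "T \<noteq> {}"
  shows "loc_objective rho Y T (loc_min rho Y T) \<le> loc_objective rho Y T nu"
proof -
  obtain m where "\<And>nu. loc_objective rho Y T m \<le> loc_objective rho Y T nu"
    using loc_objective_has_minimizer[OF assms, where Y = Y] by blast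
  with loc_min_eqI[OF assms(1,4,5)] show ?thesis
    by metis
qed

lemma convex_on_le_beyond_minimizer:
  fixes f :: "real \<Rightarrow> real"
  assumes "convex_on UNIV f" "\<And>z. f a \<le> f z" "min a y \<le> x" "x \<le> max a y"
  shows "f x \<le> f y"
proof (cases "a = y")
  case True
  then show ?thesis using assms(3,4) by simp
next
  case False
  define t where "t = (x - a) / (y - a)"
  have t: "0 \<le> t" "t \<le> 1"
    using False assms(3,4) by (auto simp: t_def divide_simps min_def max_def split: if_splits)
  have "(1 - t) * a + t * y = a + t * (y - a)"
    by (simp add: algebra_simps)
  then have "x = (1 - t) * a + t * y"
    using False by (simp add: t_def)
  then have "f x \<le> (1 - t) * f a + t * f y"
    using convex_onD[OF assms(1) t] by simp
  also have "\<dots> \<le> (1 - t) * f y + t * f y"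
    using assms(2)[of y] t by (intro add_right_mono mult_left_mono) auto
  finally show ?thesis
    by (simp add: algebra_simps)
qed

lemma loc_objective_partition:
  assumes "partition_on S P" "finite S"
  shows "loc_objective rho Y S mu = (\<Sum>B\<in>P. loc_objective rho Y B mu)"
proof -
  have "\<forall>B\<in>P. finite B"
    using assms by (metis Union_upper finite_subset partition_onD1)
  then show ?thesis
    unfolding loc_objective_def partition_onD1[OF assms(1)]
    using sum.Union_disjoint_sets partition_onD2[OF assms(1)] by simp
qed

lemma loc_min_partition_bounds:
  assumes rho: "strictly_convex rho" "\<And>x. rho x \<ge> 0" "rho 0 = 0"
    and S: "finite S" "S \<noteq> {}" and P: "partition_on S P"
    and blocks: "\<And>B. B \<in> P \<Longrightarrow> loc_min rho Y B \<in> {a..b}"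
  shows "loc_min rho Y S \<in> {a..b}"
proof -
  let ?F = "loc_objective rho Y"
  define m where "m = loc_min rho Y S"
  define c where "c = max a (min b m)"
  have block_ne: "finite B" "B \<noteq> {}" if "B \<in> P" for B
    using that S(1) P by (auto simp: partition_on_def intro: finite_subset)
  obtain B0 where "B0 \<in> P"
    using S(2) P by (auto simp: partition_on_def)
  then have "a \<le> b"
    using blocks by fastforce
  have "?F B c \<le> ?F B m" if B: "B \<in> P" for B
  proof (rule convex_on_le_beyond_minimizer[where f = "?F B" and a = "loc_min rho Y B"])
    show "convex_on UNIV (?F B)"
      using strictly_convex_imp_convex_on strictly_convex_loc_objective rho(1) block_ne[OF B] by blast
    show "?F B (loc_min rho Y B) \<le> ?F B z" for z
      using loc_min_minimizes[OF rho block_ne[OF B]] .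
    show "min (loc_min rho Y B) m \<le> c" "c \<le> max (loc_min rho Y B) m"
      using blocks[OF B] by (auto simp: c_def)
  qed
  then have "?F S c \<le> ?F S m"
    unfolding loc_objective_partition[OF P S(1)] by (rule sum_mono)
  then have "?F S c \<le> ?F S nu" for nu
    using loc_min_minimizes[OF rho S, of Y nu] unfolding m_def by linarith
  then have "m = c"
    unfolding m_def using loc_min_eqI[OF rho(1) S] by blast
  moreover have "c \<in> {a..b}"
    using \<open>a \<le> b\<close> by (simp add: c_def)
  ultimately show ?thesis
    by (simp add: m_def)
qed

theorem lemma3p2:
  fixes rho :: "real \<Rightarrow> real" and Y :: "'a \<Rightarrow> real"
    and S :: "'a set" and P :: "'a set set"
  assumes "strictly_convex rho"
    and "\<And>x. rho x \<ge> 0"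
    and "rho 0 = 0"
    and "finite S" and "S \<noteq> {}"
    and "partition_on S P"
  shows "Min ((\<lambda>B. loc_min rho Y B) ` P) \<le> loc_min rho Y S
       \<and> loc_min rho Y S \<le> Max ((\<lambda>B. loc_min rho Y B) ` P)"
proof -
  have "finite P"
    using assms(4,6) by (metis finite_UnionD partition_onD1)
  then have "loc_min rho Y B \<in> {Min (loc_min rho Y ` P)..Max (loc_min rho Y ` P)}"
    if "B \<in> P" for B
    using that by simp
  from loc_min_partition_bounds[OF assms this] show ?thesis
    by simp
qed

end
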